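(* Let $n\ge 2$, $0\le m\le n$ and $k$ generic, with the setup described in the context. Define the currents $R^+_0=Q_+$, $R^+_i=Q_++A_1+\dots+A_i$ ($i\ge 1$), $R^-_0=Q_-$, $R^-_i=Q_-+A_{-1}+\dots+A_{-i}$ ($i\ge1$). (These satisfy $R^\pm_i(z)R^\pm_i(w)\sim (z-w)^{-2}$, $R^\pm_i(z)R^\pm_j(w)\sim -(k+n-1)(z-w)^{-2}$ for $i\ne j$, $R^+_i(z)R^-_j(w)\sim (k+n-1)(z-w)^{-2}$, $R^\pm_i(z)Y(w)\sim \pm(z-w)^{-2}$, $Y(z)Y(w)\sim 0$.) Then the two fields $$\mathcal{E}_{n[m]}(z)=:\Big(\big((k+n-1)\partial+R^-_{m-1}\big)\cdots\big((k+n-1)\partial+R^-_1\big)R^-_0\Big)e^{\Xi}:(z),$$ $$\mathcal{F}_{n[m]}(z)=:\Big(\big((k+n-1)\partial+R^+_{n-m-1}\big)\cdots\big((k+n-1)\partial+R^+_1\big)R^+_0\Big)e^{-\Xi}:(z)$$ belong to $\mathcal{W}_{n[m]}(k)$, i.e. they commute with all screenings $E_i$ and $\Psi_\pm$ of the $n[m]$ realization; they are the two generating currents $\mathcal{E},\mathcal{F}$ of the algebra $\mathcal{W}^{(2)}_n(k)$ in the $n[m]$ realization. Here $\partial=\partial/\partial z$, the operator $((k+n-1)\partial+R)$ applied to a differential polynomial $P$ means $(k+n-1)\partial P+:RP:$, and derivatives act only inside the outer brackets (not on the exponential). For $m=1$ the first product reduces to $R^-_0$, for $m=0$ one has $\mathcal{E}_{n[0]}=e^{\Xi}$;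 for $m=n-1$ the second reduces to $R^+_0$, and for $m=n$, $\mathcal{F}_{n[n]}=e^{-\Xi}$.
   Context: Setup. Fix integers $n\ge 2$ and $0\le m\le n$, a generic complex number $k$ (in particular $k\neq -n$), and put $K=k+n$. Let $\varphi=(\varphi_1,\dots,\varphi_{n+1})$ be free scalar fields with OPE $\partial\varphi_i(z)\partial\varphi_j(w)\sim\delta_{ij}(z-w)^{-2}$, and let $(\,,\,)$ be the standard symmetric bilinear form on $\mathbb{C}^{n+1}$. Choose vectors $a_i$ ($1\le i\le n-m-1$), $a_{-i}$ ($1\le i\le m-1$), $\psi_+$ (present iff $m\le n-1$), $\psi_-$ (present iff $m\ge 1$), and $\xi$ in $\mathbb{C}^{n+1}$ whose nonzero pairwise products are: $(a_j,a_j)=2K$ for every $a_j$ present; $(a_i,a_{i+1})=-K$ for $1\le i\le n-m-2$; $(a_{-i},a_{-i-1})=-K$ for $1\le i\le m-2$; $(a_1,\psi_+)=-K$; $(a_{-1},\psi_-)=-K$; $(\psi_\pm,\psi_\pm)=1$; $(\psi_+,\psi_-)=K-1$; $(\psi_+,\xi)=1$; $(\psi_-,\xi)=-1$; all other products (including $(\xi,\xi)$ and $(a_j,\xi)$) vanish. (These $n+1$ vectors form a basis, unique up to orthogonal transformation.) Define currents $A_j=(a_j,\partial\varphi)$, $Q_\pm=(\psi_\pm,\partial\varphi)$, $Y=(\xi,\partial\varphi)$ and the field $\Xi=(\xi,\varphi)$, so $\partial e^{\Xi}=:Ye^{\Xi}:$. The screening operators are $E_j=\oint e^{(a_j,\varphi)}$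 for each $a_j$ present and $\Psi_\pm=\oint e^{(\psi_\pm,\varphi)}$ for each $\psi_\pm$ present. Let $\mathcal{V}_\xi$ be the space of fields $:P(\partial\varphi)e^{p\Xi}:$, $p\in\mathbb{Z}$, with $P$ a (normal-ordered) differential polynomial in the components of $\partial\varphi$. A field $X(w)$ commutes with a screening $\oint s(z)\,dz$ if the residue at $z=w$ of the OPE $s(z)X(w)$ vanishes. The vertex algebra $\mathcal{W}_{n[m]}(k)$ (the "$n[m]$ realization" of $\mathcal{W}^{(2)}_n(k)$) is the centralizer in $\mathcal{V}_\xi$ of all these screenings. When $m=0$ one writes $\psi=\psi_+$, $Q=Q_+$. All products of fields are normal ordered. *)

theory Defs
  imports "HOL-Complex_Analysis.Complex_Analysis"
begin

text \<open>A configuration of the free bosons is a tuple of entire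
functions phi i (components 0..n, i.e. C^(n+1)). A (normally ordered) differential
polynomial P in the components of d phi is modelled by the map sending phi and a point w
to the value P(d phi(w), d^2 phi(w), ...). Normally ordered products of such polynomials
are pointwise products, and the total derivative is the derivative in w.\<close>

type_synonym curve = "nat \<Rightarrow> complex \<Rightarrow> complex"
type_synonym dpoly = "curve \<Rightarrow> complex \<Rightarrow> complex"

definition bf :: "nat \<Rightarrow> (nat \<Rightarrow> complex) \<Rightarrow> (nat \<Rightarrow> complex) \<Rightarrow> complex" where
  "bf n u v = (\<Sum>i\<le>n. u i * v i)"

definition cur :: "nat \<Rightarrow> (nat \<Rightarrow> complex) \<Rightarrow> dpoly" where
  "cur n v = (\<lambda>\<phi> w. \<Sum>i\<le>n. v i * deriv (\<phi> i) w)"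

definition dop :: "complex \<Rightarrow> dpoly \<Rightarrow> dpoly \<Rightarrow> dpoly" where
  "dop c R P = (\<lambda>\<phi> w. c * deriv (\<lambda>\<zeta>. P \<phi> \<zeta>) w + R \<phi> w * P \<phi> w)"

fun chain :: "complex \<Rightarrow> (nat \<Rightarrow> dpoly) \<Rightarrow> nat \<Rightarrow> dpoly" where
  "chain c R 0 = (\<lambda>\<phi> w. 1)"
| "chain c R (Suc 0) = R 0"
| "chain c R (Suc (Suc j)) = dop c (R (Suc j)) (chain c R (Suc j))"

text \<open>Residue at z = w of the OPE  e^{(a,phi)}(z) :P(d phi) e^{p Xi}:(w), computed by Wick's
theorem, divided by the (nonvanishing) factor e^{(a + p xi, phi)(w)}:
  (z-w)^{(a,p xi)} e^{(a, phi(z) - phi(w))} P evaluated with every d^j phi_i(w) replaced by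
  d^j phi_i(w) + a_i d_w^j log(z-w) = d^j phi_i(w) - a_i (j-1)!/(z-w)^j.
The latter substitution is realised by evaluating P on the shifted configuration
  zeta |-> phi(zeta) + a log((z-zeta)/(z-w))  at zeta = w.\<close>
definition scr_res :: "nat \<Rightarrow> (nat \<Rightarrow> complex) \<Rightarrow> (nat \<Rightarrow> complex) \<Rightarrow> dpoly \<Rightarrow> int
    \<Rightarrow> curve \<Rightarrow> complex \<Rightarrow> complex" where
  "scr_res n a xi P p \<phi> w =
     residue (\<lambda>z. (z - w) powr (of_int p * bf n a xi)
                  * exp (\<Sum>i\<le>n. a i * (\<phi> i z - \<phi> i w))
                  * P (\<lambda>i \<zeta>. \<phi> i \<zeta> + a i * ln ((z - \<zeta>) / (z - w))) w) w"

text \<open>The field :P e^{p Xi}: (Xi = (xi,phi)) commutes with the screening oint e^{(a,phi)}: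
the residue field vanishes identically.\<close>
definition commutes :: "nat \<Rightarrow> (nat \<Rightarrow> complex) \<Rightarrow> (nat \<Rightarrow> complex) \<Rightarrow> dpoly \<Rightarrow> int \<Rightarrow> bool" where
  "commutes n a xi P p \<longleftrightarrow>
     (\<forall>\<phi>. (\<forall>i. \<phi> i holomorphic_on UNIV) \<longrightarrow> (\<forall>w. scr_res n a xi P p \<phi> w = 0))"

text \<open>Labels of the basis vectors: VA j is a_j (j > 0) or a_{-|j|} (j < 0); VPp = psi_+,
VPm = psi_-, VXi = xi.\<close>
datatype vlab = VA int | VPp | VPm | VXi

fun present :: "nat \<Rightarrow> nat \<Rightarrow> vlab \<Rightarrow> bool" where
  "present n m (VA j) \<longleftrightarrow> (1 \<le> j \<and> j \<le> int n - int m - 1) \<or> (1 \<le> -j \<and> -j \<le> int m - 1)"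
| "present n m VPp \<longleftrightarrow> m \<le> n - 1"
| "present n m VPm \<longleftrightarrow> 1 \<le> m"
| "present n m VXi \<longleftrightarrow> True"

fun vec :: "(nat \<Rightarrow> nat \<Rightarrow> complex) \<Rightarrow> (nat \<Rightarrow> nat \<Rightarrow> complex) \<Rightarrow> (nat \<Rightarrow> complex)
    \<Rightarrow> (nat \<Rightarrow> complex) \<Rightarrow> (nat \<Rightarrow> complex) \<Rightarrow> vlab \<Rightarrow> (nat \<Rightarrow> complex)" where
  "vec aP aM psiP psiM xi (VA j) = (if 0 < j then aP (nat j) else aM (nat (- j)))"
| "vec aP aM psiP psiM xi VPp = psiP"
| "vec aP aM psiP psiM xi VPm = psiM"
| "vec aP aM psiP psiM xi VXi = xi"

text \<open>Prescribed Gram matrix (K = k + n).\<close>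
fun gram :: "complex \<Rightarrow> vlab \<Rightarrow> vlab \<Rightarrow> complex" where
  "gram K (VA i) (VA j) =
     (if i = j then 2 * K
      else if ((0 < i \<and> 0 < j) \<or> (i < 0 \<and> j < 0)) \<and> \<bar>i - j\<bar> = 1 then - K else 0)"
| "gram K (VA i) VPp = (if i = 1 then - K else 0)"
| "gram K VPp (VA i) = (if i = 1 then - K else 0)"
| "gram K (VA i) VPm = (if i = -1 then - K else 0)"
| "gram K VPm (VA i) = (if i = -1 then - K else 0)"
| "gram K (VA i) VXi = 0"
| "gram K VXi (VA i) = 0"
| "gram K VPp VPp = 1"
| "gram K VPm VPm = 1"
| "gram K VPp VPm = K - 1"
| "gram K VPm VPp = K - 1"
| "gram K VPp VXi = 1"
| "gram K VXi VPp = 1"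
| "gram K VPm VXi = -1"
| "gram K VXi VPm = -1"
| "gram K VXi VXi = 0"

definition realization :: "nat \<Rightarrow> nat \<Rightarrow> complex \<Rightarrow> (nat \<Rightarrow> nat \<Rightarrow> complex) \<Rightarrow> (nat \<Rightarrow> nat \<Rightarrow> complex)
    \<Rightarrow> (nat \<Rightarrow> complex) \<Rightarrow> (nat \<Rightarrow> complex) \<Rightarrow> (nat \<Rightarrow> complex) \<Rightarrow> bool" where
  "realization n m K aP aM psiP psiM xi \<longleftrightarrow>
     (\<forall>l l'. present n m l \<and> present n m l' \<longrightarrow>
        bf n (vec aP aM psiP psiM xi l) (vec aP aM psiP psiM xi l') = gram K l l')"

definition Rvec :: "(nat \<Rightarrow> complex) \<Rightarrow> (nat \<Rightarrow> nat \<Rightarrow> complex) \<Rightarrow> nat \<Rightarrow> (nat \<Rightarrow> complex)" where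
  "Rvec psi a i = (\<lambda>c. psi c + (\<Sum>j\<in>{1..i}. a j c))"

end

theory Submission
  imports Defs
begin

(*
  By Wick's theorem the residue of e^(a,phi)(z) against :P e^(p Xi):(w) is the residue at z = w of
  e^(a,phi(z)) times a Laurent polynomial in z - w.  For P the chain
  (c d + R_(L-1)) ... (c d + R_1) R_0, with c = k + n - 1, its coefficients arise from the monomial
  e^-(a,phi) (z - w)^g, g = p (a,xi), by the steps  C |-> c dC + (c A + R_i) C + e_i C / (z - w),
  where A = (a, d phi) and e_i = c g - (R_i, a).  Taking the residue turns the derivative of the
  coefficients into the derivative in w, so once the residue vanishes identically, all later steps
  with e_i = 0 keep it zero.  The Gram matrix leaves only three patterns: g >= 0 and all e_i = 0 (no
  pole at all); a = R_0 with e_0 = -(c + 1), where d e^(a,phi) = A e^(a,phi) cancels the double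
  pole; and a = R_j - R_(j-1) with e_(j-1) = c + 1 = -e_j.  The F-current is the E-current of the
  mirrored realization psi_+- <-> psi_-+, a_i <-> a_(-i), xi <-> -xi.
*)

lemma sum_int_shift_vanishing_ends:
  fixes f :: "int \<Rightarrow> 'a::comm_monoid_add"
  assumes "f a = 0" "f (b + 1) = 0"
  shows "(\<Sum>k=a..b. f (k + 1)) = (\<Sum>k=a..b. f k)"
proof -
  have "(\<Sum>k=a..b. f (k + 1)) = (\<Sum>k=a+1..b+1. f k)"
    by (rule sum.reindex_bij_witness[of _ "\<lambda>k. k - 1" "\<lambda>k. k + 1"]) auto
  also have "\<dots> = (\<Sum>k=a..b+1. f k)"
  proof (rule sum.mono_neutral_left)
    have "{a..b+1} - {a+1..b+1} \<subseteq> {a}" by auto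
    then show "\<forall>i\<in>{a..b+1} - {a+1..b+1}. f i = 0" using assms(1) by blast
  qed auto
  also have "\<dots> = (\<Sum>k=a..b. f k)"
  proof (rule sum.mono_neutral_right)
    have "{a..b+1} - {a..b} \<subseteq> {b+1}" by auto
    then show "\<forall>i\<in>{a..b+1} - {a..b}. f i = 0" using assms(2) by blast
  qed auto
  finally show ?thesis .
qed

lemma residue_sum:
  assumes "finite S" "\<And>k. k \<in> S \<Longrightarrow> f k holomorphic_on UNIV - {w}"
  shows "residue (\<lambda>z. \<Sum>k\<in>S. f k z) w = (\<Sum>k\<in>S. residue (f k) w)"
  using assms
proof (induction S rule: finite_induct)
  case empty
  then show ?case by (simp add: residue_const)
next
  case (insert x S)
  then have "residue (\<lambda>z. f x z + (\<Sum>k\<in>S. f k z)) w = residue (f x) w + residue (\<lambda>z. \<Sum>k\<in>S. f k z) w"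
    by (intro residue_add[of UNIV]) (auto intro!: holomorphic_intros)
  then show ?case
    using insert by simp
qed

lemma residue_mult_powi:
  assumes "v holomorphic_on UNIV"
  shows "residue (\<lambda>z. v z * (z - w) powi k) w
       = (if k < 0 then (deriv ^^ nat (- k - 1)) v w / fact (nat (- k - 1)) else 0)"
proof (cases "k < 0")
  case True
  then have "(z - w) powi k = 1 / (z - w) ^ Suc (nat (- k - 1))" for z
    by (simp add: power_int_def power_inverse divide_inverse Suc_nat_eq_nat_zadd1)
  then show ?thesis
    using True residue_holomorphic_over_power[OF open_UNIV UNIV_I assms] by simp
next
  case False
  then have "residue (\<lambda>z. v z * (z - w) ^ nat k) w = 0"
    by (intro residue_holo[of UNIV]) (use assms in \<open>auto intro!: holomorphic_intros\<close>)
  then show ?thesis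
    using False by (simp add: power_int_def)
qed

section \<open>Laurent polynomials with holomorphic coefficients\<close>

type_synonym coeffs = "int \<Rightarrow> complex \<Rightarrow> complex"

definition laurent :: "nat \<Rightarrow> coeffs \<Rightarrow> complex \<Rightarrow> complex \<Rightarrow> complex" where
  "laurent N C z x = (\<Sum>k=-int N..int N. C k x * (z - x) powi k)"

definition coeffs_supp :: "nat \<Rightarrow> coeffs \<Rightarrow> bool" where
  "coeffs_supp M C \<longleftrightarrow> (\<forall>k. int M < \<bar>k\<bar> \<longrightarrow> C k = (\<lambda>_. 0))"

definition coeffs_holomorphic :: "coeffs \<Rightarrow> bool" where
  "coeffs_holomorphic C \<longleftrightarrow> (\<forall>k. C k holomorphic_on UNIV)"

definition coeffs_deriv :: "coeffs \<Rightarrow> coeffs" where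
  "coeffs_deriv C k = (\<lambda>x. deriv (C k) x - of_int (k + 1) * C (k + 1) x)"

definition coeffs_step :: "complex \<Rightarrow> (complex \<Rightarrow> complex) \<Rightarrow> complex \<Rightarrow> coeffs \<Rightarrow> coeffs" where
  "coeffs_step c F e C k = (\<lambda>x. c * coeffs_deriv C k x + F x * C k x + e * C (k + 1) x)"

definition laurent_residue :: "nat \<Rightarrow> (complex \<Rightarrow> complex) \<Rightarrow> coeffs \<Rightarrow> complex \<Rightarrow> complex" where
  "laurent_residue N v C x = (\<Sum>j<N. C (- int (Suc j)) x * (deriv ^^ j) v x / fact j)"

lemma coeffs_supp_sum_shift:
  assumes "coeffs_supp M C" "M < N"
  shows "(\<Sum>k=-int N..int N. C (k + 1) x * h (k + 1)) = (\<Sum>k=-int N..int N. C k x * h k)"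
  using assms unfolding coeffs_supp_def
  by (intro sum_int_shift_vanishing_ends[where f = "\<lambda>k. C k x * h k"]) auto

lemma laurent_shift:
  assumes "coeffs_supp M C" "M < N" "z \<noteq> x"
  shows "laurent N (\<lambda>k. C (k + 1)) z x = laurent N C z x / (z - x)"
proof -
  have "laurent N (\<lambda>k. C (k + 1)) z x
      = (\<Sum>k=-int N..int N. C (k + 1) x * ((z - x) powi (k + 1) / (z - x)))"
    unfolding laurent_def using assms(3) by (intro sum.cong) (simp_all add: power_int_add)
  also have "\<dots> = (\<Sum>k=-int N..int N. C k x * ((z - x) powi k / (z - x)))"
    by (rule coeffs_supp_sum_shift[OF assms(1,2)])
  also have "\<dots> = laurent N C z x / (z - x)"
    unfolding laurent_def by (simp add: sum_divide_distrib)
  finally show ?thesis .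
qed

lemma has_field_derivative_laurent:
  assumes "coeffs_supp M C" "M < N" "coeffs_holomorphic C" "z \<noteq> x"
  shows "((\<lambda>y. laurent N C z y) has_field_derivative laurent N (coeffs_deriv C) z x) (at x)"
proof -
  have "((\<lambda>y. C k y * (z - y) powi k) has_field_derivative
      deriv (C k) x * (z - x) powi k - C k x * (of_int k * (z - x) powi (k - 1))) (at x)" for k
  proof -
    have "(C k has_field_derivative deriv (C k) x) (at x)"
      using assms(3) unfolding coeffs_holomorphic_def by (intro holomorphic_derivI[of _ UNIV]) auto
    then show ?thesis
      using assms(4) by (auto intro!: derivative_eq_intros simp: algebra_simps)
  qed
  then have "((\<lambda>y. laurent N C z y) has_field_derivative
      (\<Sum>k=-int N..int N. deriv (C k) x * (z - x) powi k)
      - (\<Sum>k=-int N..int N. C k x * (of_int k * (z - x) powi (k - 1)))) (at x)"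
    unfolding laurent_def sum_subtractf[symmetric] by (intro DERIV_sum)
  also have "(\<Sum>k=-int N..int N. C k x * (of_int k * (z - x) powi (k - 1)))
      = (\<Sum>k=-int N..int N. C (k + 1) x * (of_int (k + 1) * (z - x) powi k))"
    using coeffs_supp_sum_shift[OF assms(1,2), of x "\<lambda>k. of_int k * (z - x) powi (k - 1)"] by simp
  finally show ?thesis
    unfolding laurent_def coeffs_deriv_def by (simp add: sum_subtractf algebra_simps)
qed

lemma has_field_derivative_laurent_residue:
  assumes "coeffs_supp M C" "M < N" "coeffs_holomorphic C" "v holomorphic_on UNIV"
  shows "((\<lambda>y. laurent_residue N v C y) has_field_derivative
           laurent_residue N v (coeffs_deriv C) x) (at x)"
proof -
  obtain N' where N': "N = Suc N'" using assms(2) by (cases N) auto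
  have C_N: "C (- int (Suc N')) = (\<lambda>_. 0)" using assms(1,2) unfolding coeffs_supp_def N' by auto
  have "((\<lambda>y. C (- int (Suc j)) y * (deriv ^^ j) v y / fact j) has_field_derivative
      deriv (C (- int (Suc j))) x * (deriv ^^ j) v x / fact j
      + C (- int (Suc j)) x * (deriv ^^ Suc j) v x / fact j) (at x)" for j
  proof -
    have "(C (- int (Suc j)) has_field_derivative deriv (C (- int (Suc j))) x) (at x)"
      using assms(3) unfolding coeffs_holomorphic_def by (intro holomorphic_derivI[of _ UNIV]) auto
    moreover have "((deriv ^^ j) v has_field_derivative (deriv ^^ Suc j) v x) (at x)"
      using holomorphic_higher_deriv[OF assms(4)] by (auto intro!: holomorphic_derivI[of _ UNIV])
    ultimately show ?thesis
      by (auto intro!: derivative_eq_intros simp: add_divide_distrib algebra_simps)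
  qed
  then have "((\<lambda>y. laurent_residue N v C y) has_field_derivative
      (\<Sum>j<N. deriv (C (- int (Suc j))) x * (deriv ^^ j) v x / fact j)
      + (\<Sum>j<N. C (- int (Suc j)) x * (deriv ^^ Suc j) v x / fact j)) (at x)"
    unfolding laurent_residue_def sum.distrib[symmetric] by (intro DERIV_sum)
  also have "(\<Sum>j<N. C (- int (Suc j)) x * (deriv ^^ Suc j) v x / fact j)
      = (\<Sum>j<N'. C (- int (Suc j)) x * (deriv ^^ Suc j) v x / fact j)"
    using C_N by (simp add: N')
  also have "\<dots> = (\<Sum>j<N'. of_nat (Suc j) * C (- int (Suc j)) x * (deriv ^^ Suc j) v x / fact (Suc j))"
    by (intro sum.cong refl) (simp add: fact_Suc del: of_nat_Suc)
  also have "\<dots> = (\<Sum>j<N. of_nat j * C (- int j) x * (deriv ^^ j) v x / fact j)"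
    by (simp only: N' sum.lessThan_Suc_shift) simp
  finally show ?thesis
    unfolding laurent_residue_def coeffs_deriv_def
    by (simp add: sum.distrib[symmetric] add_divide_distrib algebra_simps)
qed

lemma coeffs_supp_step:
  assumes "coeffs_supp M C"
  shows "coeffs_supp (Suc M) (coeffs_step c F e C)"
  unfolding coeffs_supp_def
proof (intro allI impI)
  fix k :: int
  assume "int (Suc M) < \<bar>k\<bar>"
  then have "C k = (\<lambda>_. 0)" "C (k + 1) = (\<lambda>_. 0)"
    using assms unfolding coeffs_supp_def by auto
  then show "coeffs_step c F e C k = (\<lambda>_. 0)"
    unfolding coeffs_step_def coeffs_deriv_def by simp
qed

lemma coeffs_holomorphic_step:
  "coeffs_holomorphic C \<Longrightarrow> F holomorphic_on UNIV \<Longrightarrow> coeffs_holomorphic (coeffs_step c F e C)"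
  unfolding coeffs_holomorphic_def coeffs_step_def coeffs_deriv_def
  by (auto intro!: holomorphic_intros)

lemma laurent_step:
  assumes "coeffs_supp M C" "M < N" "z \<noteq> x"
  shows "laurent N (coeffs_step c F e C) z x
       = c * laurent N (coeffs_deriv C) z x + F x * laurent N C z x + e * laurent N C z x / (z - x)"
proof -
  have "laurent N (coeffs_step c F e C) z x
      = c * laurent N (coeffs_deriv C) z x + F x * laurent N C z x + e * laurent N (\<lambda>k. C (k + 1)) z x"
    unfolding laurent_def coeffs_step_def by (simp add: sum.distrib sum_distrib_left algebra_simps)
  then show ?thesis
    using laurent_shift[OF assms] by simp
qed

lemma laurent_residue_step:
  "laurent_residue N v (coeffs_step c F e C) x
     = c * laurent_residue N v (coeffs_deriv C) x + F x * laurent_residue N v C x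
       + e * laurent_residue N v (\<lambda>k. C (k + 1)) x"
  unfolding laurent_residue_def coeffs_step_def
  by (simp add: sum.distrib sum_distrib_left algebra_simps add_divide_distrib)

lemma laurent_residue_step_eq_0:
  assumes "coeffs_supp M C" "M < N" "coeffs_holomorphic C" "v holomorphic_on UNIV"
    and "\<And>y. laurent_residue N v C y = 0"
  shows "laurent_residue N v (coeffs_step c F 0 C) x = 0"
proof -
  have "((\<lambda>y. laurent_residue N v C y) has_field_derivative laurent_residue N v (coeffs_deriv C) x) (at x)"
    by (rule has_field_derivative_laurent_residue[OF assms(1-4)])
  moreover have "((\<lambda>y. laurent_residue N v C y) has_field_derivative 0) (at x)"
    using assms(5) by simp
  ultimately have "laurent_residue N v (coeffs_deriv C) x = 0"
    using DERIV_unique by blast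
  then show ?thesis
    using assms(5) by (simp add: laurent_residue_step)
qed

lemma laurent_residue_two_terms:
  assumes "\<And>k. k \<le> -3 \<Longrightarrow> C k = (\<lambda>_. 0)" "2 \<le> N"
  shows "laurent_residue N v C x = C (-1) x * v x + C (-2) x * deriv v x"
proof -
  have "laurent_residue N v C x = (\<Sum>j<2. C (- int (Suc j)) x * (deriv ^^ j) v x / fact j)"
    unfolding laurent_residue_def
    by (rule sum.mono_neutral_right) (use assms in auto)
  then show ?thesis
    by (simp add: numeral_2_eq_2)
qed

lemma residue_laurent:
  assumes "v holomorphic_on UNIV"
  shows "residue (\<lambda>z. v z * laurent N C z w) w = laurent_residue N v C w"
proof -
  have "residue (\<lambda>z. v z * laurent N C z w) w
      = (\<Sum>k=-int N..int N. residue (\<lambda>z. C k w * (v z * (z - w) powi k)) w)"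
    unfolding laurent_def sum_distrib_left
    by (subst residue_sum[symmetric]) (use assms in \<open>auto intro!: holomorphic_intros simp: algebra_simps\<close>)
  also have "\<dots> = (\<Sum>k=-int N..int N.
      if k < 0 then C k w * (deriv ^^ nat (- k - 1)) v w / fact (nat (- k - 1)) else 0)"
  proof (intro sum.cong refl)
    fix k
    have "residue (\<lambda>z. C k w * (v z * (z - w) powi k)) w = C k w * residue (\<lambda>z. v z * (z - w) powi k) w"
      by (rule residue_lmul[of UNIV]) (use assms in \<open>auto intro!: holomorphic_intros\<close>)
    then show "residue (\<lambda>z. C k w * (v z * (z - w) powi k)) w
        = (if k < 0 then C k w * (deriv ^^ nat (- k - 1)) v w / fact (nat (- k - 1)) else 0)"
      by (simp add: residue_mult_powi[OF assms])
  qed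
  also have "\<dots> = (\<Sum>k=-int N..-1.
      if k < 0 then C k w * (deriv ^^ nat (- k - 1)) v w / fact (nat (- k - 1)) else 0)"
    by (rule sum.mono_neutral_right) auto
  also have "\<dots> = laurent_residue N v C w"
    unfolding laurent_residue_def
    by (rule sum.reindex_bij_witness[of _ "\<lambda>j. - int (Suc j)" "\<lambda>k. nat (- k - 1)"]) auto
  finally show ?thesis .
qed

definition monomial_coeffs :: "int \<Rightarrow> (complex \<Rightarrow> complex) \<Rightarrow> coeffs" where
  "monomial_coeffs g u = (\<lambda>k. if k = g then u else (\<lambda>_. 0))"

primrec iter_coeffs ::
    "complex \<Rightarrow> (nat \<Rightarrow> complex \<Rightarrow> complex) \<Rightarrow> (nat \<Rightarrow> complex) \<Rightarrow> coeffs \<Rightarrow> nat \<Rightarrow> coeffs" where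
  "iter_coeffs c F e C 0 = C"
| "iter_coeffs c F e C (Suc i) = coeffs_step c (F i) (e i) (iter_coeffs c F e C i)"

lemma coeffs_supp_iter: "coeffs_supp M C \<Longrightarrow> coeffs_supp (M + i) (iter_coeffs c F e C i)"
  by (induction i) (simp_all add: coeffs_supp_step)

lemma coeffs_holomorphic_iter:
  "coeffs_holomorphic C \<Longrightarrow> (\<And>i. F i holomorphic_on UNIV) \<Longrightarrow>
     coeffs_holomorphic (iter_coeffs c F e C i)"
  by (induction i) (simp_all add: coeffs_holomorphic_step)

lemma coeffs_supp_monomial: "\<bar>g\<bar> \<le> int M \<Longrightarrow> coeffs_supp M (monomial_coeffs g u)"
  unfolding coeffs_supp_def monomial_coeffs_def by auto

lemma coeffs_holomorphic_monomial:
  "u holomorphic_on UNIV \<Longrightarrow> coeffs_holomorphic (monomial_coeffs g u)"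
  unfolding coeffs_holomorphic_def monomial_coeffs_def by (auto intro: holomorphic_intros)

lemma laurent_residue_monomial_nonneg: "0 \<le> g \<Longrightarrow> laurent_residue N v (monomial_coeffs g u) x = 0"
  unfolding laurent_residue_def monomial_coeffs_def by simp

lemma laurent_monomial:
  assumes "\<bar>g\<bar> \<le> int N"
  shows "laurent N (monomial_coeffs g u) z x = u x * (z - x) powi g"
proof -
  have "laurent N (monomial_coeffs g u) z x
      = (\<Sum>k=-int N..int N. if k = g then u x * (z - x) powi g else 0)"
    unfolding laurent_def monomial_coeffs_def by (intro sum.cong) auto
  then show ?thesis
    using assms by auto
qed

lemma coeffs_step_monomial_0:
  "coeffs_step c F 0 (monomial_coeffs 0 f) = monomial_coeffs 0 (\<lambda>x. c * deriv f x + F x * f x)"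
  unfolding coeffs_step_def coeffs_deriv_def monomial_coeffs_def by (auto simp: fun_eq_iff simp del: of_int_add)

lemma iter_coeffs_monomial_0:
  "(\<And>i. i < L \<Longrightarrow> e i = 0) \<Longrightarrow> \<exists>f. iter_coeffs c F e (monomial_coeffs 0 u) L = monomial_coeffs 0 f"
  by (induction L) (auto simp: coeffs_step_monomial_0)

lemma laurent_residue_iter_eq_0:
  assumes "coeffs_supp M C" "coeffs_holomorphic C" "\<And>i. F i holomorphic_on UNIV" "v holomorphic_on UNIV"
    and "M + L < N" "j \<le> L" "\<And>i. j \<le> i \<Longrightarrow> i < L \<Longrightarrow> e i = 0"
    and "\<And>x. laurent_residue N v (iter_coeffs c F e C j) x = 0"
  shows "laurent_residue N v (iter_coeffs c F e C L) x = 0"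
proof -
  have "\<forall>x. laurent_residue N v (iter_coeffs c F e C L) x = 0"
  proof (rule dec_induct[OF assms(6), where P = "\<lambda>l. \<forall>x. laurent_residue N v (iter_coeffs c F e C l) x = 0"])
    fix l
    assume l: "j \<le> l" "l < L" and IH: "\<forall>x. laurent_residue N v (iter_coeffs c F e C l) x = 0"
    show "\<forall>x. laurent_residue N v (iter_coeffs c F e C (Suc l)) x = 0"
      using laurent_residue_step_eq_0[OF coeffs_supp_iter[OF assms(1)] _ coeffs_holomorphic_iter[OF assms(2,3)]
          assms(4), of l N] IH l assms(5,7) by simp
  qed (use assms(8) in simp)
  then show ?thesis ..
qed

lemma laurent_residue_iter_head:
  assumes "u holomorphic_on UNIV" "v holomorphic_on UNIV" "\<And>i. F i holomorphic_on UNIV"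
    and "\<And>x. deriv u x = - A x * u x" "\<And>x. deriv v x = A x * v x"
    and "\<And>x. F 0 x = c * A x + A x" "e 0 = - (c + 1)" "\<And>i. 1 \<le> i \<Longrightarrow> i < L \<Longrightarrow> e i = 0"
    and "1 \<le> L" "L + 1 < N"
  shows "laurent_residue N v (iter_coeffs c F e (monomial_coeffs (-1) u) L) x = 0"
proof (rule laurent_residue_iter_eq_0[where M = 1 and j = 1])
  let ?C = "iter_coeffs c F e (monomial_coeffs (-1) u) 1"
  fix y
  have "?C (-1) y = A y * u y" "?C (-2) y = - u y"
    by (simp_all add: assms(4,6,7) coeffs_step_def coeffs_deriv_def monomial_coeffs_def algebra_simps)
  moreover have "?C k = (\<lambda>_. 0)" if "k \<le> -3" for k
    using that by (simp add: coeffs_step_def coeffs_deriv_def monomial_coeffs_def fun_eq_iff)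
  ultimately show "laurent_residue N v ?C y = 0"
    using laurent_residue_two_terms[of ?C N v y] assms(5,9,10) by simp
qed (use assms in \<open>auto intro: coeffs_supp_monomial coeffs_holomorphic_monomial\<close>)

lemma laurent_residue_iter_adjacent:
  assumes "u holomorphic_on UNIV" "v holomorphic_on UNIV" "\<And>i. F i holomorphic_on UNIV"
    and "\<And>x. deriv v x = A x * v x" "\<And>x. F (Suc j) x = F j x + A x"
    and "e j = c + 1" "e (Suc j) = - (c + 1)" "\<And>i. i < L \<Longrightarrow> i \<noteq> j \<Longrightarrow> i \<noteq> Suc j \<Longrightarrow> e i = 0"
    and "Suc j < L" "L < N"
  shows "laurent_residue N v (iter_coeffs c F e (monomial_coeffs 0 u) L) x = 0"
proof (rule laurent_residue_iter_eq_0[where M = 0 and j = "Suc (Suc j)"])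
  let ?C = "iter_coeffs c F e (monomial_coeffs 0 u)"
  have "\<exists>f. ?C j = monomial_coeffs 0 f"
    by (rule iter_coeffs_monomial_0) (use assms(8,9) in simp)
  then obtain f where f: "?C j = monomial_coeffs 0 f" ..
  have "coeffs_holomorphic (?C j)"
    by (rule coeffs_holomorphic_iter[OF coeffs_holomorphic_monomial[OF assms(1)] assms(3)])
  then have "monomial_coeffs 0 f 0 holomorphic_on UNIV"
    unfolding f coeffs_holomorphic_def by blast
  then have "f holomorphic_on UNIV"
    by (simp add: monomial_coeffs_def)
  then have df: "deriv (\<lambda>x. (c + 1) * f x) y = (c + 1) * deriv f y" for y
    by (intro deriv_cmult) (auto intro: holomorphic_on_imp_differentiable_at)
  define C2 where
    "C2 = coeffs_step c (F (Suc j)) (e (Suc j)) (coeffs_step c (F j) (e j) (monomial_coeffs 0 f))"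
  have C2: "?C (Suc (Suc j)) = C2"
    using f by (simp add: C2_def)
  fix y
  have C2_1: "C2 (-1) y = (c + 1) * A y * f y" and C2_2: "C2 (-2) y = - (c + 1) * f y"
    using df by (simp_all add: C2_def assms(5,6,7) coeffs_step_def coeffs_deriv_def monomial_coeffs_def algebra_simps)
  have "C2 k = (\<lambda>_. 0)" if "k \<le> -3" for k
    using that by (simp add: C2_def coeffs_step_def coeffs_deriv_def monomial_coeffs_def fun_eq_iff)
  moreover have "2 \<le> N"
    using assms(9,10) by linarith
  ultimately have "laurent_residue N v C2 y = C2 (-1) y * v y + C2 (-2) y * deriv v y"
    by (rule laurent_residue_two_terms)
  then show "laurent_residue N v (?C (Suc (Suc j))) y = 0"
    unfolding C2 C2_1 C2_2 assms(4) by (simp add: algebra_simps)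
qed (use assms in \<open>auto intro: coeffs_supp_monomial coeffs_holomorphic_monomial\<close>)

section \<open>Residue of a screening current against a chain\<close>

definition vertex :: "nat \<Rightarrow> (nat \<Rightarrow> complex) \<Rightarrow> curve \<Rightarrow> complex \<Rightarrow> complex" where
  "vertex n a \<phi> \<zeta> = exp (\<Sum>j\<le>n. a j * \<phi> j \<zeta>)"

lemma cur_holomorphic: "\<forall>i. \<phi> i holomorphic_on UNIV \<Longrightarrow> cur n a \<phi> holomorphic_on UNIV"
  unfolding cur_def by (intro holomorphic_intros holomorphic_deriv) auto

lemma cur_uminus: "cur n (\<lambda>j. - a j) \<phi> x = - cur n a \<phi> x"
  unfolding cur_def by (simp add: sum_negf)

lemma vertex_holomorphic: "\<forall>i. \<phi> i holomorphic_on UNIV \<Longrightarrow> vertex n a \<phi> holomorphic_on UNIV"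
  unfolding vertex_def by (intro holomorphic_intros) auto

lemma has_field_derivative_vertex:
  assumes "\<forall>i. \<phi> i holomorphic_on UNIV"
  shows "(vertex n a \<phi> has_field_derivative cur n a \<phi> x * vertex n a \<phi> x) (at x)"
proof -
  have "((\<lambda>\<zeta>. \<Sum>j\<le>n. a j * \<phi> j \<zeta>) has_field_derivative cur n a \<phi> x) (at x)"
    unfolding cur_def using assms by (intro DERIV_sum DERIV_cmult holomorphic_derivI[of _ UNIV]) auto
  from DERIV_chain2[OF DERIV_exp this] show ?thesis
    unfolding vertex_def by (simp add: mult.commute)
qed

lemma deriv_vertex: "\<forall>i. \<phi> i holomorphic_on UNIV \<Longrightarrow> deriv (vertex n a \<phi>) x = cur n a \<phi> x * vertex n a \<phi> x"
  by (rule DERIV_imp_deriv[OF has_field_derivative_vertex])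

lemma has_field_derivative_vertex_powi:
  fixes g :: int
  assumes "\<forall>i. \<phi> i holomorphic_on UNIV" "z \<noteq> \<zeta>"
  shows "((\<lambda>x. vertex n a \<phi> x * (z - x) powi g) has_field_derivative
           (cur n a \<phi> \<zeta> - of_int g / (z - \<zeta>)) * (vertex n a \<phi> \<zeta> * (z - \<zeta>) powi g)) (at \<zeta>)"
proof -
  have "((\<lambda>x. (z - x) powi g) has_field_derivative of_int g * (z - \<zeta>) powi (g - 1) * (0 - 1)) (at \<zeta>)"
    by (rule DERIV_power_int[OF DERIV_diff[OF DERIV_const DERIV_ident]]) (use assms(2) in simp)
  moreover have "(z - \<zeta>) powi (g - 1) = (z - \<zeta>) powi g / (z - \<zeta>)"
    using assms(2) by (simp add: power_int_diff)
  ultimately have "((\<lambda>x. (z - x) powi g) has_field_derivative - (of_int g / (z - \<zeta>)) * (z - \<zeta>) powi g) (at \<zeta>)"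
    by simp
  from DERIV_mult[OF has_field_derivative_vertex[OF assms(1)] this] show ?thesis
    by (simp add: ring_distribs mult_ac)
qed

lemma chain_Suc: "chain c R (Suc i) = dop c (R i) (chain c R i)"
  by (cases i) (simp_all add: dop_def)

lemma dop_conjugate:
  assumes "open B" "\<zeta> \<in> B" and W_nz: "\<And>x. x \<in> B \<Longrightarrow> W x \<noteq> 0"
    and WP: "\<And>x. x \<in> B \<Longrightarrow> W x * P \<psi> x = L x"
    and dW: "(W has_field_derivative \<mu> * W \<zeta>) (at \<zeta>)" and dL: "(L has_field_derivative L') (at \<zeta>)"
  shows "W \<zeta> * dop c R P \<psi> \<zeta> = c * L' + (R \<psi> \<zeta> - c * \<mu>) * L \<zeta>"
proof -
  have "((\<lambda>x. L x / W x) has_field_derivative (L' * W \<zeta> - L \<zeta> * (\<mu> * W \<zeta>)) / (W \<zeta> * W \<zeta>)) (at \<zeta>)"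
    by (rule DERIV_divide[OF dL dW W_nz[OF assms(2)]])
  then have "(P \<psi> has_field_derivative (L' * W \<zeta> - L \<zeta> * (\<mu> * W \<zeta>)) / (W \<zeta> * W \<zeta>)) (at \<zeta>)"
    by (rule has_field_derivative_transform_within_open[OF _ assms(1,2)])
       (metis W_nz WP nonzero_mult_div_cancel_left)
  then show ?thesis
    using WP[OF assms(2)] W_nz[OF assms(2)] unfolding dop_def
    by (simp add: DERIV_imp_deriv field_simps)
qed

definition shift_config :: "(nat \<Rightarrow> complex) \<Rightarrow> curve \<Rightarrow> complex \<Rightarrow> complex \<Rightarrow> curve" where
  "shift_config a \<phi> z w = (\<lambda>i \<zeta>. \<phi> i \<zeta> + a i * ln ((z - \<zeta>) / (z - w)))"

lemma has_field_derivative_shift_config: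
  assumes "\<phi> i holomorphic_on UNIV" "\<zeta> \<in> ball w (cmod (z - w))"
  shows "(shift_config a \<phi> z w i has_field_derivative deriv (\<phi> i) \<zeta> - a i / (z - \<zeta>)) (at \<zeta>)"
proof -
  have zw: "z \<noteq> w" and z\<zeta>: "z \<noteq> \<zeta>"
    using assms(2) by (auto simp: dist_norm norm_minus_commute)
  define q where "q = (z - \<zeta>) / (z - w)"
  have "q - 1 = (w - \<zeta>) / (z - w)"
    unfolding q_def using zw by (simp add: field_simps)
  then have "cmod (q - 1) < 1"
    using assms(2) zw by (simp add: norm_divide dist_norm divide_less_eq norm_minus_commute)
  then have "0 < Re q"
    using abs_Re_le_cmod[of "q - 1"] by auto
  then have "(Ln has_field_derivative inverse q) (at q)"
    by (intro has_field_derivative_Ln) (auto simp: complex_nonpos_Reals_iff)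
  moreover have "((\<lambda>x. (z - x) / (z - w)) has_field_derivative - 1 / (z - w)) (at \<zeta>)"
    by (intro DERIV_cdivide derivative_eq_intros) auto
  ultimately have "((\<lambda>x. ln ((z - x) / (z - w))) has_field_derivative - 1 / (z - \<zeta>)) (at \<zeta>)"
    using DERIV_chain2[of Ln] zw z\<zeta> unfolding q_def by (fastforce simp: field_simps)
  moreover have "(\<phi> i has_field_derivative deriv (\<phi> i) \<zeta>) (at \<zeta>)"
    using assms(1) by (intro holomorphic_derivI[of _ UNIV]) auto
  ultimately have "(shift_config a \<phi> z w i has_field_derivative deriv (\<phi> i) \<zeta> + a i * (- 1 / (z - \<zeta>))) (at \<zeta>)"
    unfolding shift_config_def by (intro DERIV_add DERIV_cmult)
  then show ?thesis
    by simp
qed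

lemma cur_shift_config:
  assumes "\<forall>i. \<phi> i holomorphic_on UNIV" "\<zeta> \<in> ball w (cmod (z - w))"
  shows "cur n v (shift_config a \<phi> z w) \<zeta> = cur n v \<phi> \<zeta> - bf n v a / (z - \<zeta>)"
proof -
  have h: "deriv (shift_config a \<phi> z w i) \<zeta> = deriv (\<phi> i) \<zeta> - a i / (z - \<zeta>)" for i
    using has_field_derivative_shift_config[OF _ assms(2)] assms(1) by (simp add: DERIV_imp_deriv)
  have "cur n v (shift_config a \<phi> z w) \<zeta> = (\<Sum>i\<le>n. v i * deriv (\<phi> i) \<zeta> - v i * a i / (z - \<zeta>))"
    unfolding cur_def h by (simp add: algebra_simps)
  then show ?thesis
    unfolding cur_def bf_def by (simp add: sum_subtractf sum_divide_distrib)
qed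

definition screening_coeffs ::
    "nat \<Rightarrow> complex \<Rightarrow> (nat \<Rightarrow> complex) \<Rightarrow> (nat \<Rightarrow> nat \<Rightarrow> complex) \<Rightarrow> int \<Rightarrow> curve \<Rightarrow> nat \<Rightarrow> coeffs"
  where
  "screening_coeffs n c a r g \<phi> =
     iter_coeffs c (\<lambda>i \<zeta>. c * cur n a \<phi> \<zeta> + cur n (r i) \<phi> \<zeta>) (\<lambda>i. c * of_int g - bf n (r i) a)
       (monomial_coeffs g (vertex n (\<lambda>j. - a j) \<phi>))"

lemma coeffs_supp_screening: "\<bar>g\<bar> \<le> 1 \<Longrightarrow> coeffs_supp (Suc i) (screening_coeffs n c a r g \<phi> i)"
  unfolding screening_coeffs_def using coeffs_supp_iter[OF coeffs_supp_monomial[of g 1]] by simp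

lemma coeffs_holomorphic_screening:
  "\<forall>i. \<phi> i holomorphic_on UNIV \<Longrightarrow> coeffs_holomorphic (screening_coeffs n c a r g \<phi> i)"
  unfolding screening_coeffs_def
  by (intro coeffs_holomorphic_iter coeffs_holomorphic_monomial vertex_holomorphic)
     (auto intro!: holomorphic_intros cur_holomorphic)

lemma laurent_screening_coeffs:
  fixes g :: int
  assumes hol: "\<forall>i. \<phi> i holomorphic_on UNIV" and g: "\<bar>g\<bar> \<le> 1" and "i < N"
    and "\<zeta> \<in> ball w (cmod (z - w))"
  shows "vertex n (\<lambda>j. - a j) \<phi> \<zeta> * (z - \<zeta>) powi g * chain c (\<lambda>i. cur n (r i)) i (shift_config a \<phi> z w) \<zeta>
       = laurent N (screening_coeffs n c a r g \<phi> i) z \<zeta>"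
  using assms(3,4)
proof (induction i arbitrary: \<zeta>)
  case 0
  then have gN: "\<bar>g\<bar> \<le> int N"
    using g by linarith
  show ?case
    unfolding screening_coeffs_def iter_coeffs.simps(1) laurent_monomial[OF gN] chain.simps(1) by simp
next
  case (Suc i)
  define B where "B = ball w (cmod (z - w))"
  define W where "W = (\<lambda>x. vertex n (\<lambda>j. - a j) \<phi> x * (z - x) powi g)"
  define C where "C = screening_coeffs n c a r g \<phi> i"
  have \<zeta>B: "\<zeta> \<in> B" and z\<zeta>: "z \<noteq> \<zeta>"
    using Suc.prems by (auto simp: B_def dist_norm norm_minus_commute)
  have W_nz: "W x \<noteq> 0" if "x \<in> B" for x
    using that by (auto simp: W_def B_def vertex_def dist_norm norm_minus_commute)
  have WP: "W x * chain c (\<lambda>i. cur n (r i)) i (shift_config a \<phi> z w) x = laurent N C z x" if "x \<in> B" for x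
    using Suc.IH[of x] Suc.prems that unfolding W_def C_def B_def by simp
  have dW: "(W has_field_derivative (- cur n a \<phi> \<zeta> - of_int g / (z - \<zeta>)) * W \<zeta>) (at \<zeta>)"
    using has_field_derivative_vertex_powi[OF hol z\<zeta>, of n "\<lambda>j. - a j" g]
    unfolding W_def by (simp add: cur_uminus)
  have supp: "coeffs_supp (Suc i) C"
    unfolding C_def using g by (rule coeffs_supp_screening)
  have "coeffs_holomorphic C"
    unfolding C_def using hol by (rule coeffs_holomorphic_screening)
  then have dL: "((\<lambda>y. laurent N C z y) has_field_derivative laurent N (coeffs_deriv C) z \<zeta>) (at \<zeta>)"
    using has_field_derivative_laurent[OF supp _ _ z\<zeta>] Suc.prems by simp
  have "W \<zeta> * chain c (\<lambda>i. cur n (r i)) (Suc i) (shift_config a \<phi> z w) \<zeta>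
      = c * laurent N (coeffs_deriv C) z \<zeta>
        + (cur n (r i) (shift_config a \<phi> z w) \<zeta> - c * (- cur n a \<phi> \<zeta> - of_int g / (z - \<zeta>)))
          * laurent N C z \<zeta>"
    unfolding chain_Suc
    by (rule dop_conjugate[where P = "chain c (\<lambda>i. cur n (r i)) i" and \<psi> = "shift_config a \<phi> z w",
          OF _ \<zeta>B W_nz WP dW dL]) (simp add: B_def)
  also have "\<dots> = c * laurent N (coeffs_deriv C) z \<zeta>
      + (c * cur n a \<phi> \<zeta> + cur n (r i) \<phi> \<zeta>) * laurent N C z \<zeta>
      + (c * of_int g - bf n (r i) a) * laurent N C z \<zeta> / (z - \<zeta>)"
    unfolding cur_shift_config[OF hol Suc.prems(2)]
    by (simp add: algebra_simps diff_divide_distrib add_divide_distrib)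
  also have "\<dots> = laurent N (coeffs_step c (\<lambda>\<zeta>. c * cur n a \<phi> \<zeta> + cur n (r i) \<phi> \<zeta>)
      (c * of_int g - bf n (r i) a) C) z \<zeta>"
    using laurent_step[OF supp _ z\<zeta>] Suc.prems by simp
  finally show ?case
    unfolding W_def C_def screening_coeffs_def by simp
qed

lemma scr_res_chain_eq_laurent_residue:
  fixes g :: int
  assumes hol: "\<forall>i. \<phi> i holomorphic_on UNIV" and "\<bar>g\<bar> \<le> 1" "of_int p * bf n a xi = of_int g" "L < N"
  shows "scr_res n a xi (chain c (\<lambda>i. cur n (r i)) L) p \<phi> w
       = laurent_residue N (vertex n a \<phi>) (screening_coeffs n c a r g \<phi> L) w"
proof -
  have "(z - w) powr (of_int p * bf n a xi) * exp (\<Sum>i\<le>n. a i * (\<phi> i z - \<phi> i w))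
        * chain c (\<lambda>i. cur n (r i)) L (\<lambda>i \<zeta>. \<phi> i \<zeta> + a i * ln ((z - \<zeta>) / (z - w))) w
      = vertex n a \<phi> z * laurent N (screening_coeffs n c a r g \<phi> L) z w" if "z \<noteq> w" for z
  proof -
    have "exp (\<Sum>i\<le>n. a i * (\<phi> i z - \<phi> i w)) = vertex n a \<phi> z * vertex n (\<lambda>j. - a j) \<phi> w"
      by (simp add: vertex_def right_diff_distrib sum_subtractf sum_negf exp_diff exp_minus field_simps)
    moreover have "(z - w) powr (of_int p * bf n a xi) = (z - w) powi g"
      using that assms(3) by (simp add: complex_powr_of_int)
    ultimately show ?thesis
      using laurent_screening_coeffs[OF hol assms(2,4), of w w z n a c r] that
      unfolding shift_config_def by (simp add: ac_simps)
  qed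
  then have "scr_res n a xi (chain c (\<lambda>i. cur n (r i)) L) p \<phi> w
      = residue (\<lambda>z. vertex n a \<phi> z * laurent N (screening_coeffs n c a r g \<phi> L) z w) w"
    unfolding scr_res_def by (intro residue_cong) (auto simp: eventually_at_filter)
  also have "\<dots> = laurent_residue N (vertex n a \<phi>) (screening_coeffs n c a r g \<phi> L) w"
    by (rule residue_laurent[OF vertex_holomorphic[OF hol]])
  finally show ?thesis .
qed

lemma commutes_if_laurent_residue_eq_0:
  fixes g :: int
  assumes "\<bar>g\<bar> \<le> 1" "of_int p * bf n a xi = of_int g"
    and "\<And>\<phi> w. \<forall>i. \<phi> i holomorphic_on UNIV \<Longrightarrow>
           laurent_residue (L + 2) (vertex n a \<phi>) (screening_coeffs n c a r g \<phi> L) w = 0"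
  shows "commutes n a xi (chain c (\<lambda>i. cur n (r i)) L) p"
  unfolding commutes_def using scr_res_chain_eq_laurent_residue[OF _ assms(1,2), of _ L "L + 2"] assms(3) by simp

lemma commutes_chain_regular:
  fixes g :: int
  assumes "0 \<le> g" "g \<le> 1" "of_int p * bf n a xi = of_int g" "\<And>i. i < L \<Longrightarrow> bf n (r i) a = c * of_int g"
  shows "commutes n a xi (chain c (\<lambda>i. cur n (r i)) L) p"
proof (rule commutes_if_laurent_residue_eq_0[where g = g])
  fix \<phi> :: curve and w
  assume hol: "\<forall>i. \<phi> i holomorphic_on UNIV"
  show "laurent_residue (L + 2) (vertex n a \<phi>) (screening_coeffs n c a r g \<phi> L) w = 0"
    unfolding screening_coeffs_def
    by (rule laurent_residue_iter_eq_0[where M = 1 and j = 0])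
       (use assms hol in \<open>auto intro!: coeffs_supp_monomial coeffs_holomorphic_monomial vertex_holomorphic
          holomorphic_intros cur_holomorphic laurent_residue_monomial_nonneg\<close>)
qed (use assms in auto)

lemma commutes_chain_head:
  assumes "of_int p * bf n a xi = -1" "1 \<le> L" "r 0 = a" "bf n a a = 1"
    and "\<And>i. 1 \<le> i \<Longrightarrow> i < L \<Longrightarrow> bf n (r i) a = - c"
  shows "commutes n a xi (chain c (\<lambda>i. cur n (r i)) L) p"
proof (rule commutes_if_laurent_residue_eq_0[where g = "-1"])
  fix \<phi> :: curve and w
  assume hol: "\<forall>i. \<phi> i holomorphic_on UNIV"
  show "laurent_residue (L + 2) (vertex n a \<phi>) (screening_coeffs n c a r (-1) \<phi> L) w = 0"
    unfolding screening_coeffs_def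
    by (rule laurent_residue_iter_head[where A = "cur n a \<phi>"])
       (use assms hol in \<open>auto intro!: vertex_holomorphic holomorphic_intros cur_holomorphic
          simp: deriv_vertex cur_uminus\<close>)
qed (use assms in auto)

lemma commutes_chain_adjacent:
  assumes "of_int p * bf n a xi = 0" "Suc j < L" "r (Suc j) = (\<lambda>k. r j k + a k)"
    and "bf n (r j) a = - (c + 1)" "bf n (r (Suc j)) a = c + 1"
    and "\<And>i. i < L \<Longrightarrow> i \<noteq> j \<Longrightarrow> i \<noteq> Suc j \<Longrightarrow> bf n (r i) a = 0"
  shows "commutes n a xi (chain c (\<lambda>i. cur n (r i)) L) p"
proof (rule commutes_if_laurent_residue_eq_0[where g = 0])
  fix \<phi> :: curve and w
  assume hol: "\<forall>i. \<phi> i holomorphic_on UNIV"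
  have cur_Suc: "cur n (r (Suc j)) \<phi> x = cur n (r j) \<phi> x + cur n a \<phi> x" for x
    unfolding assms(3) cur_def by (simp add: algebra_simps sum.distrib)
  show "laurent_residue (L + 2) (vertex n a \<phi>) (screening_coeffs n c a r 0 \<phi> L) w = 0"
    unfolding screening_coeffs_def
    by (rule laurent_residue_iter_adjacent[where A = "cur n a \<phi>" and j = j])
       (use assms(2,6) hol in \<open>auto intro!: vertex_holomorphic holomorphic_intros cur_holomorphic
          simp: deriv_vertex cur_Suc assms(4,5) ac_simps\<close>)
qed (use assms in auto)

section \<open>The Gram matrix of the realization\<close>

lemma Rvec_0: "Rvec psi a 0 = psi"
  unfolding Rvec_def by simp

lemma Rvec_Suc: "Rvec psi a (Suc i) = (\<lambda>k. Rvec psi a i k + a (Suc i) k)"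
  unfolding Rvec_def by (simp add: add.assoc)

lemma bf_Rvec: "bf n (Rvec psi a i) x = bf n psi x + (\<Sum>j=1..i. bf n (a j) x)"
  unfolding bf_def Rvec_def
  by (simp add: algebra_simps sum.distrib sum_distrib_left sum.swap[where A = "{..n}"])

definition gram_R_minus :: "complex \<Rightarrow> nat \<Rightarrow> vlab \<Rightarrow> complex" where
  "gram_R_minus K i l = gram K VPm l + (\<Sum>j=1..i. gram K (VA (- int j)) l)"

lemma gram_R_minus_0: "gram_R_minus K 0 l = gram K VPm l"
  unfolding gram_R_minus_def by simp

lemma gram_R_minus_Suc: "gram_R_minus K (Suc i) l = gram_R_minus K i l + gram K (VA (- int (Suc i))) l"
  unfolding gram_R_minus_def by simp

lemma gram_R_minus_VA_pos: "0 < j \<Longrightarrow> gram_R_minus K i (VA j) = 0"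
  unfolding gram_R_minus_def by simp

lemma gram_R_minus_VPp: "gram_R_minus K i VPp = K - 1"
  unfolding gram_R_minus_def by simp

lemma gram_R_minus_VPm: "gram_R_minus K i VPm = (if i = 0 then 1 else 1 - K)"
  unfolding gram_R_minus_def by (simp add: sum.delta)

lemma gram_R_minus_VA_neg:
  "1 \<le> j \<Longrightarrow> gram_R_minus K i (VA (- int j)) = (if Suc i = j then - K else if i = j then K else 0)"
  by (induction i) (auto simp: gram_R_minus_0 gram_R_minus_Suc split: if_splits)

context
  fixes n m :: nat and K :: complex and aP aM :: "nat \<Rightarrow> nat \<Rightarrow> complex"
    and psiP psiM xi :: "nat \<Rightarrow> complex"
  assumes realization: "realization n m K aP aM psiP psiM xi"
begin

lemma bf_vec_vec:
  "present n m l \<Longrightarrow> present n m l' \<Longrightarrow>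
     bf n (vec aP aM psiP psiM xi l) (vec aP aM psiP psiM xi l') = gram K l l'"
  using realization unfolding realization_def by blast

lemma bf_Rvec_minus_vec:
  assumes "i < m" "present n m l"
  shows "bf n (Rvec psiM aM i) (vec aP aM psiP psiM xi l) = gram_R_minus K i l"
proof -
  have "bf n (aM j) (vec aP aM psiP psiM xi l) = gram K (VA (- int j)) l" if "j \<in> {1..i}" for j
    using bf_vec_vec[of "VA (- int j)" l] that assms by simp
  then show ?thesis
    using bf_vec_vec[of VPm l] assms unfolding bf_Rvec gram_R_minus_def by simp
qed

lemma commutes_E:
  assumes "present n m l" "l \<noteq> VXi"
  shows "commutes n (vec aP aM psiP psiM xi l) xi (chain (K - 1) (\<lambda>i. cur n (Rvec psiM aM i)) m) 1"
proof -
  let ?a = "vec aP aM psiP psiM xi l"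
  have R: "bf n (Rvec psiM aM i) ?a = gram_R_minus K i l" if "i < m" for i
    using bf_Rvec_minus_vec[OF that assms(1)] .
  have X: "of_int 1 * bf n ?a xi = gram K l VXi"
    using bf_vec_vec[OF assms(1), of VXi] by simp
  show ?thesis
  proof (cases l)
    case (VA j)
    consider "0 < j" | jj where "j = - int jj" "1 \<le> jj" "jj < m"
      using assms(1) VA by (cases "0 < j") (auto intro: that(2)[of "nat (- j)"])
    then show ?thesis
    proof cases
      case 1
      then show ?thesis
        using R X VA by (intro commutes_chain_regular[where g = 0]) (auto simp: gram_R_minus_VA_pos)
    next
      case 2
      show ?thesis
      proof (rule commutes_chain_adjacent[where j = "jj - 1"])
        show "Rvec psiM aM (Suc (jj - 1)) = (\<lambda>k. Rvec psiM aM (jj - 1) k + ?a k)"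
          unfolding Rvec_Suc using VA 2 by simp
      qed (use R X VA 2 in \<open>auto simp: gram_R_minus_VA_neg\<close>)
    qed
  next
    case VPp
    then show ?thesis
      using R X by (intro commutes_chain_regular[where g = 1]) (auto simp: gram_R_minus_VPp)
  next
    case VPm
    then show ?thesis
      using R R[of 0] X assms(1) by (intro commutes_chain_head) (auto simp: gram_R_minus_VPm Rvec_0)
  qed (use assms(2) in simp)
qed

end

fun mirror :: "vlab \<Rightarrow> vlab" where
  "mirror (VA j) = VA (- j)"
| "mirror VPp = VPm"
| "mirror VPm = VPp"
| "mirror VXi = VXi"

lemma mirror_mirror [simp]: "mirror (mirror l) = l"
  by (cases l) auto

lemma mirror_eq_VXi_iff [simp]: "mirror l = VXi \<longleftrightarrow> l = VXi"
  by (cases l) auto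

lemma present_mirror: "1 \<le> n \<Longrightarrow> m \<le> n \<Longrightarrow> present n (n - m) (mirror l) = present n m l"
  by (cases l) auto

lemma gram_mirror:
  "gram K (mirror l) (mirror l') = (if (l = VXi) = (l' = VXi) then gram K l l' else - gram K l l')"
  by (cases l; cases l') auto

(* The premise only rules out the label VA 0, which names no vector. *)
lemma vec_mirror:
  "present n m l \<Longrightarrow>
     vec aM aP psiM psiP (- xi) (mirror l) = (if l = VXi then - xi else vec aP aM psiP psiM xi l)"
  by (cases l) auto

lemma bf_uminus_left: "bf n (- u) v = - bf n u v"
  unfolding bf_def by (simp add: sum_negf)

lemma bf_uminus_right: "bf n u (- v) = - bf n u v"
  unfolding bf_def by (simp add: sum_negf)

lemma realization_mirror:
  assumes "realization n m K aP aM psiP psiM xi" "1 \<le> n" "m \<le> n"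
  shows "realization n (n - m) K aM aP psiM psiP (- xi)"
  unfolding realization_def
proof (intro allI impI)
  fix l l'
  assume "present n (n - m) l \<and> present n (n - m) l'"
  then have pres: "present n m (mirror l)" "present n m (mirror l')"
    using present_mirror[OF assms(2,3)] mirror_mirror by metis+
  have "bf n (vec aP aM psiP psiM xi (mirror l)) (vec aP aM psiP psiM xi (mirror l'))
      = gram K (mirror l) (mirror l')"
    using assms(1) pres unfolding realization_def by blast
  then show "bf n (vec aM aP psiM psiP (- xi) l) (vec aM aP psiM psiP (- xi) l') = gram K l l'"
    using vec_mirror[OF pres(1)] vec_mirror[OF pres(2)] gram_mirror[of K "mirror l" "mirror l'"]
    by (auto simp: bf_uminus_left bf_uminus_right split: if_splits)
qed

lemma commutes_uminus: "commutes n a (- xi) P (- p) = commutes n a xi P p"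
  unfolding commutes_def scr_res_def bf_def by (simp add: sum_negf)

lemma commutes_F:
  assumes "realization n m K aP aM psiP psiM xi" "1 \<le> n" "m \<le> n" "present n m l" "l \<noteq> VXi"
  shows "commutes n (vec aP aM psiP psiM xi l) xi (chain (K - 1) (\<lambda>i. cur n (Rvec psiP aP i)) (n - m)) (-1)"
proof -
  have "commutes n (vec aM aP psiM psiP (- xi) (mirror l)) (- xi)
      (chain (K - 1) (\<lambda>i. cur n (Rvec psiP aP i)) (n - m)) 1"
    using assms by (intro commutes_E[OF realization_mirror]) (auto simp: present_mirror)
  then show ?thesis
    using commutes_uminus[of n _ xi _ "-1"] vec_mirror[OF assms(4)] assms(5) by simp
qed

theorem theorem1p1:
  fixes n m :: nat
  assumes "2 \<le> n" and "m \<le> n"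
  shows "\<exists>S :: complex set. finite S \<and>
    (\<forall>k. k \<notin> S \<longrightarrow>
      (\<forall>aP aM psiP psiM xi.
         realization n m (k + of_nat n) aP aM psiP psiM xi \<longrightarrow>
         (let E = chain (k + of_nat n - 1) (\<lambda>i. cur n (Rvec psiM aM i)) m;
              F = chain (k + of_nat n - 1) (\<lambda>i. cur n (Rvec psiP aP i)) (n - m)
          in \<forall>l. present n m l \<and> l \<noteq> VXi \<longrightarrow>
                commutes n (vec aP aM psiP psiM xi l) xi E 1 \<and>
                commutes n (vec aP aM psiP psiM xi l) xi F (-1))))"
  using assms by (intro exI[of _ "{}"]) (auto simp: Let_def intro: commutes_E commutes_F)

end
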